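(* Let $n\ge1$, $0<\lambda<1$, $p>1$, $\nu>1$, and let $w$ be a non-negative locally integrable function on $\mathbb{R}^n$. Let $\Lambda=\{x_j\}$ be a sequence of points in $\mathbb{R}^n$ such that $$\max\big(|x_i|,|x_j|\big)\le \nu|x_i-x_j|\quad\text{for all } i\neq j,$$ let $\mathcal{F}$ be the family of all cubes (with sides parallel to the axes) centered at points of $\Lambda$, and let $\Omega:=\{x_j: x_j\in\Lambda\}$. Then there exist $0<r_1<r_2<\infty$ (depending on $\nu$) such that, for the family $$\mathcal{W}_{r_1,r_2}:=\{Q\in\mathcal{Q}: r_1\,\mathrm{diam}\,Q\le \mathrm{dist}(Q,\Omega)\le r_2\,\mathrm{diam}\,Q\},$$ one has $\|f\|_{\mathcal{M}^p_{\lambda,\mathcal{F}}(w)}\simeq \|f\|_{\mathcal{M}^p_{\lambda,\mathcal{W}_{r_1,r_2}}(w)}$, i.e. there is $C\ge1$ independent of $f$ with $C^{-1}\|f\|_{\mathcal{M}^p_{\lambda,\mathcal{W}_{r_1,r_2}}(w)}\le\|f\|_{\mathcal{M}^p_{\lambda,\mathcal{F}}(w)}\le C\|f\|_{\mathcal{M}^p_{\lambda,\mathcal{W}_{r_1,r_2}}(w)}$ for all measurable $f$.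
   Context: $\mathcal{Q}$ denotes the family of all cubes in $\mathbb{R}^n$ with sides parallel to the axes. For a family $\mathcal{G}\subset\mathcal{Q}$, $$\|f\|_{\mathcal{M}^p_{\lambda,\mathcal{G}}(w)}:=\sup_{Q\in\mathcal{G}}\Big(\frac{1}{|Q|^{\lambda}}\int_Q|f|^pw\Big)^{1/p}.$$ *)

theory Defs
  imports "HOL-Analysis.Analysis"
begin

definition cube :: "'a::euclidean_space \<Rightarrow> real \<Rightarrow> 'a set" where
  "cube c r = cbox (c - r *\<^sub>R One) (c + r *\<^sub>R One)"

definition all_cubes :: "'a::euclidean_space set set" where
  "all_cubes = {cube c r | c r. r > 0}"

definition locally_integrable :: "('a::euclidean_space \<Rightarrow> real) \<Rightarrow> bool" where
  "locally_integrable w \<longleftrightarrow> (\<forall>K. compact K \<longrightarrow> set_integrable lebesgue K w)"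

definition ennroot :: "real \<Rightarrow> ennreal \<Rightarrow> ennreal" where
  "ennroot p x = (if x = \<infinity> then \<infinity> else ennreal (enn2real x powr (1 / p)))"

definition morrey_norm ::
  "real \<Rightarrow> real \<Rightarrow> 'a::euclidean_space set set \<Rightarrow> ('a \<Rightarrow> real) \<Rightarrow> ('a \<Rightarrow> real) \<Rightarrow> ennreal" where
  "morrey_norm p lam G w f =
     (SUP Q\<in>G. ennroot p (ennreal (1 / measure lebesgue Q powr lam) *
                           (\<integral>\<^sup>+ x\<in>Q. ennreal (\<bar>f x\<bar> powr p * w x) \<partial>lebesgue)))"

end

theory Submission
  imports Defs
begin

text \<open>
  Let \<open>\<mu>\<close> be the measure with density \<open>|f|^p w\<close>. A Morrey norm over a family of cubes is the
  \<open>p\<close>-th root of the best constant \<open>A\<close> with \<open>\<mu>(Q) \<le> A |Q|^\<lambda>\<close> on the family, so it suffices to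
  transfer such bounds between the two families, with constants independent of \<open>\<mu>\<close>.
  A Whitney cube lies in a cube centred at a point of \<open>\<Lambda>\<close> and of comparable size, which gives
  one direction. Conversely, cut a cube \<open>Q(x,R)\<close>, \<open>x \<in> \<Lambda>\<close>, into dyadic shells and cover the
  shell at scale \<open>t\<close> by boundedly many cubes of side \<open>\<approx> t/m\<close>. If \<open>R \<lesssim> |x|\<close>, separation keeps
  the rest of \<open>\<Lambda>\<close> at distance \<open>\<gtrsim> |x|\<close>, so all these small cubes are Whitney cubes, and the
  geometric series in \<open>t^(n\<lambda>)\<close> gives \<open>\<mu>(Q(x,R)) \<lesssim> A R^(n\<lambda>)\<close>. If \<open>R \<gtrsim> |x|\<close>, then \<open>Q(x,R)\<close> lies in
  a cube around the origin; its innermost cube, of size \<open>\<approx> dist(0,\<Lambda>)\<close>, is a Whitney cube, and a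
  small cube of an outer shell is either a Whitney cube or lies in a cube of the first kind
  around some point of \<open>\<Lambda>\<close>.
\<close>

section \<open>Axis-parallel cubes\<close>

lemma inner_One_Basis: "b \<in> Basis \<Longrightarrow> (One::'a::euclidean_space) \<bullet> b = 1"
  by (simp add: inner_sum_left inner_Basis if_distrib cong: if_cong)

lemma mem_cube: "y \<in> cube c r \<longleftrightarrow> (\<forall>b\<in>Basis. \<bar>(y - c) \<bullet> b\<bar> \<le> r)"
  unfolding cube_def mem_box
  by (auto simp: inner_diff_left inner_add_left inner_One_Basis abs_le_iff algebra_simps)

lemma sets_cube [measurable]: "cube c r \<in> sets lebesgue"
  unfolding cube_def by simp

lemma norm_le_of_mem_cube:
  fixes y :: "'a::euclidean_space"
  assumes "y \<in> cube c r"
  shows "norm (y - c) \<le> real DIM('a) * r"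
proof -
  have "norm (y - c) \<le> (\<Sum>b\<in>Basis. \<bar>(y - c) \<bullet> b\<bar>)" by (rule norm_le_l1)
  also have "\<dots> \<le> of_nat (card (Basis::'a set)) * r"
    using assms by (intro sum_bounded_above) (auto simp: mem_cube)
  finally show ?thesis by simp
qed

lemma norm_diff_le_of_mem_cube:
  fixes y :: "'a::euclidean_space"
  assumes "y \<in> cube c r" "u \<in> cube c r"
  shows "norm (y - u) \<le> real DIM('a) * (2 * r)"
  using norm_le_of_mem_cube[OF assms(1)] norm_le_of_mem_cube[OF assms(2)]
    norm_triangle_ineq4[of "y - c" "u - c"] by simp

lemma norm_gt_of_not_mem_cube: "y \<notin> cube c r \<Longrightarrow> r < norm (y - c)"
  unfolding mem_cube using Basis_le_norm by (meson le_less_trans not_le)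

lemma mem_cube_of_norm_le: "norm (y - c) \<le> r \<Longrightarrow> y \<in> cube c r"
  unfolding mem_cube using Basis_le_norm order_trans by blast

lemma centre_mem_cube: "0 \<le> r \<Longrightarrow> c \<in> cube c r"
  by (simp add: mem_cube)

lemma cube_mono: "r \<le> s \<Longrightarrow> cube c r \<subseteq> cube c s"
  by (force simp: mem_cube)

lemma cube_zero [simp]: "cube c 0 = {c}"
  using norm_le_of_mem_cube[of _ c 0] mem_cube_of_norm_le[of _ c 0] by auto

lemma cube_subset_cube: "norm (e - x) + s \<le> r \<Longrightarrow> cube e s \<subseteq> cube x r"
proof
  fix u assume r: "norm (e - x) + s \<le> r" and u: "u \<in> cube e s"
  have "\<bar>(u - x) \<bullet> b\<bar> \<le> r" if b: "b \<in> Basis" for b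
  proof -
    have "(u - x) \<bullet> b = (u - e) \<bullet> b + (e - x) \<bullet> b" by (simp add: inner_diff_left)
    moreover have "\<bar>(u - e) \<bullet> b\<bar> \<le> s" using u b by (simp add: mem_cube)
    moreover have "\<bar>(e - x) \<bullet> b\<bar> \<le> norm (e - x)" using b by (rule Basis_le_norm)
    ultimately show ?thesis using r by linarith
  qed
  then show "u \<in> cube x r" by (simp add: mem_cube)
qed

lemma measure_cube:
  "0 \<le> r \<Longrightarrow> measure lebesgue (cube (c::'a::euclidean_space) r) = (2 * r) ^ DIM('a)"
  unfolding cube_def by (simp add: content_cbox inner_diff_left inner_add_left inner_One_Basis)

lemma measure_cube_powr:
  assumes "0 < r"
  shows "measure lebesgue (cube (c::'a::euclidean_space) r) powr lam = (2 * r) powr (real DIM('a) * lam)"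
proof -
  have "(2 * r) ^ DIM('a) = (2 * r) powr real DIM('a)" using assms by (simp add: powr_realpow)
  then show ?thesis using assms by (simp add: measure_cube powr_powr)
qed

lemma diameter_cube:
  fixes c :: "'a::euclidean_space"
  assumes "0 < r"
  shows "2 * r \<le> diameter (cube c r)" "diameter (cube c r) \<le> real DIM('a) * (2 * r)"
proof -
  obtain b :: 'a where b: "b \<in> Basis" using nonempty_Basis by blast
  have "c + r *\<^sub>R b \<in> cube c r" "c - r *\<^sub>R b \<in> cube c r"
    using assms b by (auto simp: mem_cube inner_Basis abs_mult)
  moreover have "dist (c + r *\<^sub>R b) (c - r *\<^sub>R b) = 2 * r"
    using assms b by (simp add: dist_norm flip: scaleR_2)
  moreover have "bounded (cube c r)" unfolding cube_def by simp
  ultimately show "2 * r \<le> diameter (cube c r)" by (metis diameter_bounded_bound)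
  show "diameter (cube c r) \<le> real DIM('a) * (2 * r)"
    by (rule diameter_le) (use assms norm_diff_le_of_mem_cube in \<open>auto simp: dist_norm\<close>)
qed

lemma finite_cube_cover:
  assumes "0 < m"
  obtains C :: "'a::euclidean_space set" where "finite C" "C \<subseteq> cube 0 1"
    "\<And>z t y. 0 < t \<Longrightarrow> y \<in> cube z t \<Longrightarrow> \<exists>c\<in>C. y \<in> cube (z + t *\<^sub>R c) (t / m)"
proof -
  have "compact (cube (0::'a) 1)" unfolding cube_def by simp
  moreover have "cube (0::'a) 1 \<subseteq> (\<Union>c\<in>cube 0 1. ball c (1 / m))"
    using assms by auto
  ultimately obtain C where C: "C \<subseteq> cube 0 1" "finite C" "cube (0::'a) 1 \<subseteq> (\<Union>c\<in>C. ball c (1 / m))"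
    by (metis compactE_image open_ball)
  have "\<exists>c\<in>C. y \<in> cube (z + t *\<^sub>R c) (t / m)" if t: "0 < t" and y: "y \<in> cube z t" for z t y
  proof -
    define u where "u = (1 / t) *\<^sub>R (y - z)"
    have "u \<in> cube 0 1"
      using y t by (auto simp: mem_cube u_def divide_le_eq)
    then obtain c where c: "c \<in> C" "norm (u - c) < 1 / m"
      using C(3) by (auto simp: dist_norm norm_minus_commute)
    have "y - (z + t *\<^sub>R c) = t *\<^sub>R (u - c)"
      using t by (simp add: u_def algebra_simps)
    then have "norm (y - (z + t *\<^sub>R c)) = t * norm (u - c)"
      using t by simp
    also have "\<dots> \<le> t * (1 / m)"
      using t c(2) by (intro mult_left_mono) auto
    finally show ?thesis using c(1) mem_cube_of_norm_le by fastforce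
  qed
  with C that show ?thesis by blast
qed

section \<open>Dyadic shells and finite coverings\<close>

lemma mem_dyadic_shell:
  assumes "0 \<le> \<tau>" "y \<in> cube z T" "y \<notin> cube z \<tau>"
  obtains k :: nat where "\<tau> < T / 2^k" "y \<in> cube z (T / 2^k)" "y \<notin> cube z (T / 2^k / 2)"
proof -
  obtain b where b: "b \<in> Basis" "\<tau> < \<bar>(y - z) \<bullet> b\<bar>"
    using assms(3) unfolding mem_cube by force
  have pos: "0 < \<bar>(y - z) \<bullet> b\<bar>" using assms(1) b(2) by linarith
  obtain n :: nat where "T / \<bar>(y - z) \<bullet> b\<bar> < 2 ^ n"
    using real_arch_pow[of 2] by auto
  then have "T < 2 ^ n * \<bar>(y - z) \<bullet> b\<bar>"
    using pos by (simp add: divide_less_eq mult.commute)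
  moreover have "0 < 2 ^ n * \<bar>(y - z) \<bullet> b\<bar>" using pos by simp
  ultimately have "T < 2 * (2 ^ n * \<bar>(y - z) \<bullet> b\<bar>)" by linarith
  then have "T / 2^n / 2 < \<bar>(y - z) \<bullet> b\<bar>"
    by (simp add: field_simps)
  then have outside: "\<exists>n::nat. y \<notin> cube z (T / 2^n / 2)"
    using b(1) unfolding mem_cube by (meson not_le)
  define k where "k = (LEAST k::nat. y \<notin> cube z (T / 2^k / 2))"
  have "y \<notin> cube z (T / 2^k / 2)"
    unfolding k_def using outside by (rule LeastI_ex)
  moreover have inside: "y \<in> cube z (T / 2^k)"
  proof (cases k)
    case (Suc j)
    then have "\<not> y \<notin> cube z (T / 2^j / 2)"
      unfolding k_def by (metis lessI not_less_Least)
    then show ?thesis using Suc by (simp add: mult.commute)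
  qed (use assms(2) in simp)
  moreover have "\<tau> < T / 2^k"
    using cube_mono[of "T / 2^k" \<tau> z] inside assms(3) by (meson not_le subsetD)
  ultimately show ?thesis using that by blast
qed

lemma powr_divide_power2:
  fixes a b :: real
  assumes "0 \<le> a"
  shows "(a / 2^k) powr b = a powr b * (1 / 2 powr b)^k"
proof -
  have "((2::real)^k) powr b = (2 powr b)^k"
    by (simp add: powr_realpow[symmetric] powr_powr powr_power mult.commute)
  then have "(a / 2^k) powr b = a powr b / (2 powr b)^k"
    by (simp add: powr_divide assms)
  also have "\<dots> = a powr b * (1 / 2 powr b)^k"
    by (simp add: power_one_over divide_inverse power_inverse)
  finally show ?thesis .
qed

lemma suminf_geometric_ennreal:
  assumes "0 \<le> X" "0 < b"
  shows "(\<Sum>k. ennreal (X * (1 / 2 powr b)^k)) = ennreal (X / (1 - 1 / 2 powr b))"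
proof -
  have "(\<lambda>k. X * (1 / 2 powr b)^k) sums (X * (1 / (1 - 1 / 2 powr b)))"
    using assms by (intro sums_mult geometric_sums) simp
  then show ?thesis
    using assms by (subst suminf_ennreal2) (auto simp: sums_iff)
qed

lemma emeasure_cube_le_dyadic_shells:
  assumes sets_M: "sets M = sets lebesgue" and "0 \<le> \<tau>" "0 \<le> T" "0 < \<beta>" "0 \<le> K"
    and shell: "\<And>t. \<tau> < t \<Longrightarrow> t \<le> T \<Longrightarrow>
      emeasure M (cube z t - cube z (t / 2)) \<le> ennreal (K * t powr \<beta>)"
  shows "emeasure M (cube z T) \<le> emeasure M (cube z \<tau>) + ennreal (K * T powr \<beta> / (1 - 1 / 2 powr \<beta>))"
proof -
  define S where "S k = (if \<tau> < T / 2^k then cube z (T / 2^k) - cube z (T / 2^k / 2) else {})" for k :: nat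
  have S_sets: "S k \<in> sets M" for k
    unfolding S_def sets_M by simp
  have "cube z T \<subseteq> cube z \<tau> \<union> (\<Union>k. S k)"
  proof
    fix y assume "y \<in> cube z T"
    then show "y \<in> cube z \<tau> \<union> (\<Union>k. S k)"
      using mem_dyadic_shell[OF \<open>0 \<le> \<tau>\<close>, of y z T] by (auto simp: S_def)
  qed
  then have "emeasure M (cube z T) \<le> emeasure M (cube z \<tau> \<union> (\<Union>k. S k))"
    using S_sets by (intro emeasure_mono) (auto simp: sets_M)
  also have "\<dots> \<le> emeasure M (cube z \<tau>) + (\<Sum>k. emeasure M (S k))"
    using S_sets emeasure_subadditive_countably[of S M]
    by (intro order.trans[OF emeasure_subadditive] add_left_mono) (auto simp: sets_M)
  also have "(\<Sum>k. emeasure M (S k)) \<le> (\<Sum>k. ennreal (K * T powr \<beta> * (1 / 2 powr \<beta>)^k))"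
  proof (intro suminf_le)
    fix k :: nat
    have "T * 1 \<le> T * 2^k" using \<open>0 \<le> T\<close> by (intro mult_left_mono) auto
    then have "T / 2^k \<le> T" by (simp add: divide_le_eq)
    then show "emeasure M (S k) \<le> ennreal (K * T powr \<beta> * (1 / 2 powr \<beta>)^k)"
      using shell[of "T / 2^k"] powr_divide_power2[OF \<open>0 \<le> T\<close>, of k \<beta>]
      by (simp add: S_def mult.assoc)
  qed auto
  also have "\<dots> = ennreal (K * T powr \<beta> / (1 - 1 / 2 powr \<beta>))"
    using assms by (intro suminf_geometric_ennreal) auto
  finally show ?thesis by (simp add: add_left_mono)
qed

lemma emeasure_le_card_cover:
  fixes X :: real
  assumes "finite C" "S \<in> sets M" "\<And>c. c \<in> C \<Longrightarrow> B c \<in> sets M" "S \<subseteq> (\<Union>c\<in>C. B c)"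
    and bound: "\<And>c. c \<in> C \<Longrightarrow> B c \<inter> S \<noteq> {} \<Longrightarrow> emeasure M (B c) \<le> ennreal X" and "0 \<le> X"
  shows "emeasure M S \<le> ennreal (card C * X)"
proof -
  have "emeasure M S \<le> emeasure M (\<Union>c\<in>C. B c \<inter> S)"
    using assms by (intro emeasure_mono sets.finite_UN) auto
  also have "\<dots> \<le> (\<Sum>c\<in>C. emeasure M (B c \<inter> S))"
    using assms by (intro emeasure_subadditive_finite) auto
  also have "\<dots> \<le> (\<Sum>c\<in>C. ennreal X)"
  proof (intro sum_mono)
    fix c assume "c \<in> C"
    show "emeasure M (B c \<inter> S) \<le> ennreal X"
    proof (cases "B c \<inter> S = {}")
      case False
      then have "emeasure M (B c \<inter> S) \<le> emeasure M (B c)"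
        using assms \<open>c \<in> C\<close> by (intro emeasure_mono) auto
      also have "\<dots> \<le> ennreal X" using bound \<open>c \<in> C\<close> False by blast
      finally show ?thesis .
    qed simp
  qed
  also have "\<dots> = ennreal (card C * X)"
    using \<open>0 \<le> X\<close> by (simp add: ennreal_mult ennreal_of_nat_eq_real_of_nat)
  finally show ?thesis .
qed

section \<open>Whitney cubes and cubes centred on a set\<close>

definition whitney_cubes :: "real \<Rightarrow> real \<Rightarrow> 'a::euclidean_space set \<Rightarrow> 'a set set" where
  "whitney_cubes r1 r2 \<Lambda> =
     {Q \<in> all_cubes. r1 * diameter Q \<le> setdist Q \<Lambda> \<and> setdist Q \<Lambda> \<le> r2 * diameter Q}"

definition centred_cubes :: "'a::euclidean_space set \<Rightarrow> 'a set set" where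
  "centred_cubes \<Lambda> = {cube c r | c r. c \<in> \<Lambda> \<and> r > 0}"

lemma cube_in_whitney_cubesI:
  fixes e :: "'a::euclidean_space"
  assumes "0 < s" "0 \<le> r1" "0 \<le> r2"
    and "r1 * (real DIM('a) * (2 * s)) \<le> setdist (cube e s) \<Lambda>" "setdist (cube e s) \<Lambda> \<le> r2 * (2 * s)"
  shows "cube e s \<in> whitney_cubes r1 r2 \<Lambda>"
proof -
  have "r1 * diameter (cube e s) \<le> r1 * (real DIM('a) * (2 * s))"
    using diameter_cube(2)[OF \<open>0 < s\<close>] \<open>0 \<le> r1\<close> by (rule mult_left_mono)
  moreover have "r2 * (2 * s) \<le> r2 * diameter (cube e s)"
    using diameter_cube(1)[OF \<open>0 < s\<close>] \<open>0 \<le> r2\<close> by (rule mult_left_mono)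
  ultimately show ?thesis
    using assms by (auto simp: whitney_cubes_def all_cubes_def)
qed

lemma whitney_cube_subset_centred_cube:
  fixes \<Lambda> :: "'a::euclidean_space set"
  assumes Q: "Q \<in> whitney_cubes r1 r2 \<Lambda>" and "0 < r1" "0 \<le> r2"
  obtains x e s where "x \<in> \<Lambda>" "Q = cube e s" "0 < s"
    "Q \<subseteq> cube x ((2 + real DIM('a) * (1 + 2 * r2)) * s)"
proof -
  obtain e s where Qe: "Q = cube e s" and "0 < s"
    using Q by (auto simp: whitney_cubes_def all_cubes_def)
  have lower: "r1 * diameter Q \<le> setdist Q \<Lambda>" and upper: "setdist Q \<Lambda> \<le> r2 * diameter Q"
    using Q by (auto simp: whitney_cubes_def)
  have "0 < r1 * diameter Q"
    using diameter_cube(1)[OF \<open>0 < s\<close>, of e] \<open>0 < r1\<close> \<open>0 < s\<close> Qe by simp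
  then have "\<Lambda> \<noteq> {}" using lower by auto
  have "r2 * diameter Q \<le> r2 * (real DIM('a) * (2 * s))"
    using diameter_cube(2)[OF \<open>0 < s\<close>, of e] \<open>0 \<le> r2\<close> Qe by (simp add: mult_left_mono)
  then have "setdist Q \<Lambda> \<le> r2 * (real DIM('a) * (2 * s))" using upper by linarith
  then have "setdist Q \<Lambda> < r2 * (real DIM('a) * (2 * s)) + s" using \<open>0 < s\<close> by linarith
  moreover have "Q \<noteq> {}" using centre_mem_cube[of s e] \<open>0 < s\<close> Qe by auto
  ultimately obtain q x where q: "q \<in> Q" and x: "x \<in> \<Lambda>"
    and qx: "dist q x < r2 * (real DIM('a) * (2 * s)) + s"
    by (rule setdist_ltE) (use \<open>\<Lambda> \<noteq> {}\<close> in auto)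
  have "norm (e - x) \<le> norm (e - q) + dist q x"
    using norm_triangle_ineq[of "e - q" "q - x"] by (simp add: dist_norm)
  moreover have "norm (e - q) \<le> real DIM('a) * s"
    using norm_le_of_mem_cube[of q e s] q Qe by (simp add: norm_minus_commute)
  ultimately have "norm (e - x) + s \<le> (2 + real DIM('a) * (1 + 2 * r2)) * s"
    using qx by (simp add: algebra_simps)
  then show ?thesis
    using that[OF x Qe \<open>0 < s\<close>] cube_subset_cube Qe by blast
qed

section \<open>Morrey suprema of measures\<close>

lemma ennroot_mono:
  assumes "0 < p" "x \<le> y"
  shows "ennroot p x \<le> ennroot p y"
proof (cases "y = \<infinity>")
  case False
  then have "x \<noteq> \<infinity>" using assms(2) by (metis infinity_ennreal_def neq_top_trans)
  have "enn2real x \<le> enn2real y"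
    using assms(2) False by (intro enn2real_mono) (auto simp: top.not_eq_extremum)
  then have "enn2real x powr (1 / p) \<le> enn2real y powr (1 / p)"
    using assms(1) by (intro powr_mono2) auto
  then show ?thesis using False \<open>x \<noteq> \<infinity>\<close> by (simp add: ennroot_def ennreal_leI)
qed (simp add: ennroot_def)

lemma ennroot_ennreal: "0 \<le> a \<Longrightarrow> ennroot p (ennreal a) = ennreal (a powr (1 / p))"
  by (simp add: ennroot_def)

definition morrey_sup :: "real \<Rightarrow> real \<Rightarrow> 'a::euclidean_space set set \<Rightarrow> 'a measure \<Rightarrow> ennreal" where
  "morrey_sup p lam G M =
     (SUP Q\<in>G. ennroot p (ennreal (1 / measure lebesgue Q powr lam) * emeasure M Q))"

lemma morrey_norm_eq_morrey_sup:
  assumes "G \<subseteq> sets lebesgue" "f \<in> borel_measurable lebesgue" "w \<in> borel_measurable lebesgue"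
  shows "morrey_norm p lam G w f =
    morrey_sup p lam G (density lebesgue (\<lambda>x. ennreal (\<bar>f x\<bar> powr p * w x)))"
  unfolding morrey_norm_def morrey_sup_def
  using assms by (intro SUP_cong refl) (auto simp: emeasure_density)

lemma emeasure_le_of_morrey_sup_le:
  assumes "0 < p" "0 \<le> a" "morrey_sup p lam G M \<le> ennreal a" "Q \<in> G" "0 < measure lebesgue Q"
  shows "emeasure M Q \<le> ennreal (a powr p * measure lebesgue Q powr lam)"
proof -
  define L where "L = measure lebesgue Q powr lam"
  have "0 < L" using assms(5) by (simp add: L_def)
  have root_le: "ennroot p (ennreal (1 / L) * emeasure M Q) \<le> ennreal a"
    using SUP_upper[OF \<open>Q \<in> G\<close>] assms(3) unfolding morrey_sup_def L_def by (rule order_trans)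
  have "emeasure M Q \<noteq> \<infinity>"
  proof
    assume "emeasure M Q = \<infinity>"
    then have "ennroot p (ennreal (1 / L) * emeasure M Q) = \<infinity>"
      using \<open>0 < L\<close> by (simp add: ennreal_mult_top ennroot_def)
    with root_le show False by (simp add: top_unique)
  qed
  then obtain m where m: "0 \<le> m" "emeasure M Q = ennreal m"
    by (cases "emeasure M Q") auto
  then have "ennroot p (ennreal (1 / L) * emeasure M Q) = ennreal ((m / L) powr (1 / p))"
    using \<open>0 < L\<close> by (simp add: ennreal_mult[symmetric] ennroot_ennreal)
  then have "(m / L) powr (1 / p) \<le> a"
    using root_le \<open>0 \<le> a\<close> by (simp add: ennreal_le_iff)
  then have "((m / L) powr (1 / p)) powr p \<le> a powr p"
    using assms(1) by (intro powr_mono2) auto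
  then have "m / L \<le> a powr p"
    using assms(1) m(1) \<open>0 < L\<close> by (simp add: powr_powr)
  then show ?thesis
    using m \<open>0 < L\<close> by (simp add: L_def divide_le_eq ennreal_leI)
qed

lemma morrey_sup_le_of_emeasure_le:
  assumes "0 < p" "0 \<le> B"
    and "\<And>Q. Q \<in> G \<Longrightarrow> 0 < measure lebesgue Q"
    and "\<And>Q. Q \<in> G \<Longrightarrow> emeasure M Q \<le> ennreal (B * measure lebesgue Q powr lam)"
  shows "morrey_sup p lam G M \<le> ennreal (B powr (1 / p))"
  unfolding morrey_sup_def
proof (rule SUP_least)
  fix Q assume "Q \<in> G"
  define L where "L = measure lebesgue Q powr lam"
  have "0 < L" using assms(3)[OF \<open>Q \<in> G\<close>] by (simp add: L_def)
  have "ennreal (1 / L) * emeasure M Q \<le> ennreal (1 / L) * ennreal (B * L)"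
    using assms(4)[OF \<open>Q \<in> G\<close>] by (intro mult_left_mono) (auto simp: L_def)
  also have "\<dots> = ennreal B"
    using \<open>0 < L\<close> \<open>0 \<le> B\<close> by (simp add: ennreal_mult[symmetric])
  finally show "ennroot p (ennreal (1 / measure lebesgue Q powr lam) * emeasure M Q) \<le> ennreal (B powr (1 / p))"
    using ennroot_mono[OF assms(1)] \<open>0 \<le> B\<close> by (fastforce simp: L_def ennroot_ennreal)
qed

lemma morrey_sup_le_transfer:
  assumes "0 < p" "0 < K"
    and pos: "\<And>Q. Q \<in> G \<Longrightarrow> 0 < measure lebesgue Q" "\<And>Q. Q \<in> G' \<Longrightarrow> 0 < measure lebesgue Q"
    and transfer: "\<And>A Q'. 0 \<le> A \<Longrightarrow>
      (\<And>Q. Q \<in> G \<Longrightarrow> emeasure M Q \<le> ennreal (A * measure lebesgue Q powr lam)) \<Longrightarrow>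
      Q' \<in> G' \<Longrightarrow> emeasure M Q' \<le> ennreal (K * A * measure lebesgue Q' powr lam)"
  shows "morrey_sup p lam G' M \<le> ennreal (K powr (1 / p)) * morrey_sup p lam G M"
proof (cases "morrey_sup p lam G M = \<infinity>")
  case True
  then show ?thesis using \<open>0 < K\<close> by (simp add: ennreal_mult_top)
next
  case False
  then obtain a where a: "0 \<le> a" "morrey_sup p lam G M = ennreal a"
    by (cases "morrey_sup p lam G M") auto
  have "morrey_sup p lam G' M \<le> ennreal ((K * a powr p) powr (1 / p))"
  proof (rule morrey_sup_le_of_emeasure_le[OF \<open>0 < p\<close> _ pos(2)])
    show "0 \<le> K * a powr p" using \<open>0 < K\<close> by simp
    have "emeasure M Q \<le> ennreal (a powr p * measure lebesgue Q powr lam)" if "Q \<in> G" for Q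
      using emeasure_le_of_morrey_sup_le[OF \<open>0 < p\<close> a(1) _ that pos(1)[OF that]] a(2) by simp
    then show "emeasure M Q' \<le> ennreal (K * a powr p * measure lebesgue Q' powr lam)" if "Q' \<in> G'" for Q'
      using transfer[of "a powr p"] that by simp
  qed
  also have "(K * a powr p) powr (1 / p) = K powr (1 / p) * a"
    using \<open>0 < p\<close> \<open>0 < K\<close> a(1) by (simp add: powr_mult powr_powr)
  finally show ?thesis
    using a \<open>0 < K\<close> by (simp add: ennreal_mult)
qed

lemma morrey_norm_le_transfer:
  fixes G G' :: "'a::euclidean_space set set"
  assumes "0 < p" "0 < K" "G \<subseteq> all_cubes" "G' \<subseteq> all_cubes"
    and "f \<in> borel_measurable lebesgue" "w \<in> borel_measurable lebesgue"
    and transfer: "\<And>M A Q'. sets M = sets lebesgue \<Longrightarrow> (\<And>x. emeasure M {x} = 0) \<Longrightarrow> 0 \<le> A \<Longrightarrow>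
      (\<And>Q. Q \<in> G \<Longrightarrow> emeasure M Q \<le> ennreal (A * measure lebesgue Q powr lam)) \<Longrightarrow>
      Q' \<in> G' \<Longrightarrow> emeasure M Q' \<le> ennreal (K * A * measure lebesgue Q' powr lam)"
  shows "morrey_norm p lam G' w f \<le> ennreal (K powr (1 / p)) * morrey_norm p lam G w f"
proof -
  define g where "g = (\<lambda>x. ennreal (\<bar>f x\<bar> powr p * w x))"
  have "g \<in> borel_measurable lebesgue"
    using assms(5,6) unfolding g_def by measurable
  then have null: "emeasure (density lebesgue g) {x} = 0" for x
    by (simp add: emeasure_density nn_integral_null_set)
  have pos: "0 < measure lebesgue Q" if "Q \<in> all_cubes" for Q
    using that by (auto simp: all_cubes_def measure_cube)
  have "morrey_sup p lam G' (density lebesgue g) \<le>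
      ennreal (K powr (1 / p)) * morrey_sup p lam G (density lebesgue g)"
  proof (rule morrey_sup_le_transfer[OF assms(1,2)])
    show "0 < measure lebesgue Q" if "Q \<in> G" for Q using that assms(3) pos by blast
    show "0 < measure lebesgue Q" if "Q \<in> G'" for Q using that assms(4) pos by blast
  qed (use transfer null in auto)
  moreover have "G \<subseteq> sets lebesgue" "G' \<subseteq> sets lebesgue"
    using assms(3,4) by (auto simp: all_cubes_def)
  ultimately show ?thesis
    using assms(5,6) by (simp add: morrey_norm_eq_morrey_sup g_def)
qed

lemma emeasure_whitney_cube_le_centred:
  fixes \<Lambda> :: "'a::euclidean_space set"
  assumes "sets M = sets lebesgue" "0 < r1" "0 \<le> r2"
    and centred: "\<And>Q. Q \<in> centred_cubes \<Lambda> \<Longrightarrow> emeasure M Q \<le> ennreal (A * measure lebesgue Q powr lam)"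
    and "Q' \<in> whitney_cubes r1 r2 \<Lambda>"
  shows "emeasure M Q' \<le>
    ennreal ((2 + real DIM('a) * (1 + 2 * r2)) powr (real DIM('a) * lam) * A * measure lebesgue Q' powr lam)"
proof -
  define \<kappa> where "\<kappa> = 2 + real DIM('a) * (1 + 2 * r2)"
  have "0 < \<kappa>" using \<open>0 \<le> r2\<close> by (simp add: \<kappa>_def add_pos_nonneg)
  obtain x e s where "x \<in> \<Lambda>" "Q' = cube e s" "0 < s" and sub: "Q' \<subseteq> cube x (\<kappa> * s)"
    using whitney_cube_subset_centred_cube assms(2,3,5) unfolding \<kappa>_def by metis
  have "0 < \<kappa> * s" using \<open>0 < s\<close> \<open>0 < \<kappa>\<close> by simp
  have "emeasure M Q' \<le> emeasure M (cube x (\<kappa> * s))"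
    by (rule emeasure_mono[OF sub]) (simp add: assms(1) sets_cube)
  also have "\<dots> \<le> ennreal (A * measure lebesgue (cube x (\<kappa> * s)) powr lam)"
    using \<open>x \<in> \<Lambda>\<close> \<open>0 < \<kappa> * s\<close> by (intro centred) (auto simp: centred_cubes_def)
  also have "measure lebesgue (cube x (\<kappa> * s)) powr lam
      = \<kappa> powr (real DIM('a) * lam) * measure lebesgue Q' powr lam"
    using \<open>0 < \<kappa>\<close> \<open>0 < s\<close> \<open>Q' = cube e s\<close>
    by (simp add: measure_cube_powr powr_mult[symmetric] algebra_simps)
  finally show ?thesis
    by (simp add: \<kappa>_def algebra_simps)
qed

lemma morrey_norm_whitney_le_centred:
  fixes \<Lambda> :: "'a::euclidean_space set"
  assumes "0 < r1" "0 \<le> r2" "0 < p" "f \<in> borel_measurable lebesgue" "w \<in> borel_measurable lebesgue"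
  shows "morrey_norm p lam (whitney_cubes r1 r2 \<Lambda>) w f \<le>
    ennreal (((2 + real DIM('a) * (1 + 2 * r2)) powr (real DIM('a) * lam)) powr (1 / p)) *
      morrey_norm p lam (centred_cubes \<Lambda>) w f"
proof (rule morrey_norm_le_transfer[OF \<open>0 < p\<close> _ _ _ assms(4,5)])
  have "0 < 2 + real DIM('a) * (1 + 2 * r2)"
    using \<open>0 \<le> r2\<close> by (simp add: add_pos_nonneg)
  then show "0 < (2 + real DIM('a) * (1 + 2 * r2)) powr (real DIM('a) * lam)"
    by simp
  show "centred_cubes \<Lambda> \<subseteq> all_cubes" "whitney_cubes r1 r2 \<Lambda> \<subseteq> all_cubes"
    by (auto simp: centred_cubes_def whitney_cubes_def all_cubes_def)
qed (use assms(1,2) emeasure_whitney_cube_le_centred[where \<Lambda> = \<Lambda>] in blast)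

lemma ennreal_two_sided_bound:
  assumes "a \<le> ennreal K1 * b" "b \<le> ennreal K2 * a" "0 \<le> K2" "K1 \<le> C" "K2 \<le> C" "0 < C"
  shows "ennreal (1 / C) * b \<le> a" "a \<le> ennreal C * b"
proof -
  have "ennreal (1 / C) * b \<le> ennreal (1 / C) * (ennreal K2 * a)"
    using assms(2) by (rule mult_left_mono) simp
  also have "\<dots> = ennreal (K2 / C) * a"
    using assms(3,6) by (simp add: ennreal_mult[symmetric] mult.assoc[symmetric])
  also have "\<dots> \<le> 1 * a"
    using assms(5,6) by (intro mult_right_mono) (auto simp: divide_le_eq)
  finally show "ennreal (1 / C) * b \<le> a" by simp
  show "a \<le> ennreal C * b"
    using assms(1,4) by (meson ennreal_leI mult_right_mono order_trans zero_le)
qed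

lemma locally_integrable_borel_measurable:
  fixes w :: "'a::euclidean_space \<Rightarrow> real"
  assumes "locally_integrable w"
  shows "w \<in> borel_measurable lebesgue"
proof (rule borel_measurable_LIMSEQ_real)
  fix i :: nat
  have "set_integrable lebesgue (cball 0 (real i)) w"
    using assms by (simp add: locally_integrable_def)
  then show "(\<lambda>x. indicator (cball 0 (real i)) x *\<^sub>R w x) \<in> borel_measurable lebesgue"
    unfolding set_integrable_def by (rule borel_measurable_integrable)
next
  fix x :: 'a
  obtain N :: nat where "norm x \<le> real N" using real_arch_simple by blast
  then have "\<forall>\<^sub>F i in sequentially. indicator (cball 0 (real i)) x *\<^sub>R w x = w x"
    unfolding eventually_sequentially by (intro exI[of _ N]) (auto simp: indicator_def)
  then show "(\<lambda>i. indicator (cball 0 (real i)) x *\<^sub>R w x) \<longlonglongrightarrow> w x"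
    by (rule tendsto_eventually)
qed

section \<open>Measures bounded on Whitney cubes\<close>

lemma cube_close_to_set:
  fixes e :: "'a::euclidean_space"
  assumes "setdist (cube e s) S < real DIM('a) * s" "0 < s" "S \<noteq> {}" "y \<in> cube e s"
  obtains x where "x \<in> S" "cube e s \<subseteq> cube x ((1 + 2 * real DIM('a)) * s)"
    "norm y - 3 * real DIM('a) * s < norm x"
proof -
  obtain q x where q: "q \<in> cube e s" and "x \<in> S" and qx: "norm (q - x) < real DIM('a) * s"
    using assms(1) by (rule setdist_ltE) (use assms(2,3) centre_mem_cube[of s e] in \<open>auto simp: dist_norm\<close>)
  have "norm (e - q) \<le> real DIM('a) * s"
    using norm_le_of_mem_cube[OF q] by (simp add: norm_minus_commute)
  then have "norm (e - x) + s \<le> (1 + 2 * real DIM('a)) * s"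
    using qx norm_triangle_ineq[of "e - q" "q - x"] by (simp add: algebra_simps)
  moreover have "norm y < 3 * real DIM('a) * s + norm x"
    using norm_diff_le_of_mem_cube[OF assms(4) q] qx
      norm_triangle_ineq[of "y - q" "q - x"] norm_triangle_ineq[of "y - x" x] by simp
  ultimately show ?thesis using that[OF \<open>x \<in> S\<close> cube_subset_cube] by simp
qed

locale separated_points =
  fixes \<Lambda> :: "'a::euclidean_space set" and \<nu> :: real
  assumes nu_pos: "0 < \<nu>"
    and separated: "\<And>x y. x \<in> \<Lambda> \<Longrightarrow> y \<in> \<Lambda> \<Longrightarrow> x \<noteq> y \<Longrightarrow> max (norm x) (norm y) \<le> \<nu> * norm (x - y)"
begin

lemma le_norm_diff_of_separated:
  assumes "x \<in> \<Lambda>" "v \<in> \<Lambda>" "v \<noteq> x" "\<nu> * r \<le> norm x"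
  shows "r \<le> norm (x - v)"
proof -
  have "\<nu> * r \<le> \<nu> * norm (x - v)"
    using separated[OF assms(1,2)] assms(3,4) by auto
  then show ?thesis using nu_pos by simp
qed

lemma setdist_small_cube_near_point:
  fixes e :: 'a
  assumes "x \<in> \<Lambda>" "0 < s" "32 * real DIM('a) * s \<le> t" "4 * real DIM('a) * \<nu> * t \<le> norm x"
    and "norm (e - x) \<le> real DIM('a) * t" "y \<in> cube e s" "y \<notin> cube x (t / 2)"
  shows "real DIM('a) * s \<le> setdist (cube e s) \<Lambda>"
proof (rule le_setdistI)
  show "cube e s \<noteq> {}" "\<Lambda> \<noteq> {}" using assms(1,2) centre_mem_cube[of s e] by auto
  fix u v assume u: "u \<in> cube e s" and "v \<in> \<Lambda>"
  have uy: "norm (u - y) \<le> 2 * (real DIM('a) * s)"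
    using norm_diff_le_of_mem_cube[OF u assms(6)] by simp
  have ue: "norm (u - e) \<le> real DIM('a) * s"
    using norm_le_of_mem_cube[OF u] .
  have small: "32 * (real DIM('a) * s) \<le> t" "0 \<le> real DIM('a) * s"
    using assms(2,3) by (simp_all add: mult.assoc)
  show "real DIM('a) * s \<le> dist u v"
  proof (cases "v = x")
    case True
    have "t / 2 < norm (y - x)" using norm_gt_of_not_mem_cube[OF assms(7)] .
    then show ?thesis
      using True uy small norm_triangle_ineq[of "y - u" "u - x"]
      by (simp add: dist_norm norm_minus_commute)
  next
    case False
    have "4 * (real DIM('a) * t) \<le> norm (x - v)"
      using le_norm_diff_of_separated[OF assms(1) \<open>v \<in> \<Lambda>\<close> False] assms(4) by (simp add: algebra_simps)
    moreover have "t \<le> real DIM('a) * t"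
      using mult_right_mono[of 1 "real DIM('a)" t] small by simp
    ultimately show ?thesis
      using ue small assms(5) norm_triangle_ineq[of "x - e" "e - u"] norm_triangle_ineq[of "x - u" "u - v"]
      by (simp add: dist_norm norm_minus_commute)
  qed
qed

end

locale whitney_cover = separated_points \<Lambda> \<nu> for \<Lambda> :: "'a::euclidean_space set" and \<nu> +
  fixes m :: real and C :: "'a set"
  assumes mesh_ge: "32 * real DIM('a) \<le> m" "16 * real DIM('a) * \<nu> * (1 + 2 * real DIM('a)) \<le> m"
    and finite_C: "finite C" and C_subset: "C \<subseteq> cube 0 1"
    and C_covers: "\<And>z t y. 0 < t \<Longrightarrow> y \<in> cube z t \<Longrightarrow> \<exists>c\<in>C. y \<in> cube (z + t *\<^sub>R c) (t / m)"
begin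

definition near_const :: "real \<Rightarrow> real" where
  "near_const \<beta> = card C * (2 / m) powr \<beta> / (1 - 1 / 2 powr \<beta>)"

definition shell_const :: "real \<Rightarrow> real" where
  "shell_const \<beta> = (2 / m) powr \<beta> + near_const \<beta> * ((1 + 2 * real DIM('a)) / m) powr \<beta>"

definition far_const :: "real \<Rightarrow> real" where
  "far_const \<beta> = (2 * \<nu>) powr \<beta> +
     card C * shell_const \<beta> * (1 + 4 * real DIM('a) * \<nu>) powr \<beta> / (1 - 1 / 2 powr \<beta>)"

definition centred_const :: "real \<Rightarrow> real" where
  "centred_const \<beta> = near_const \<beta> + far_const \<beta>"

lemma m_ge_32: "32 \<le> m"
  using mesh_ge(1) DIM_ge_Suc0[where 'a='a] by linarith

lemma m_pos: "0 < m"
  using m_ge_32 by simp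

lemma mesh_small: "0 < t \<Longrightarrow> 32 * real DIM('a) * (t / m) \<le> t"
  using mult_right_mono[OF mesh_ge(1), of t] m_pos by (simp add: field_simps)

lemma
  assumes "0 < \<beta>"
  shows near_const_nonneg: "0 \<le> near_const \<beta>" and shell_const_nonneg: "0 \<le> shell_const \<beta>"
    and far_const_pos: "0 < far_const \<beta>" and centred_const_pos: "0 < centred_const \<beta>"
proof -
  have "1 / 2 powr \<beta> < 1" using assms by simp
  then show "0 \<le> near_const \<beta>" "0 \<le> shell_const \<beta>"
    by (simp_all add: near_const_def shell_const_def)
  then show "0 < far_const \<beta>"
    using \<open>1 / 2 powr \<beta> < 1\<close> nu_pos by (simp add: far_const_def add_pos_nonneg)
  then show "0 < centred_const \<beta>"
    using \<open>0 \<le> near_const \<beta>\<close> by (simp add: centred_const_def)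
qed

lemma norm_cover_offset: "c \<in> C \<Longrightarrow> 0 \<le> t \<Longrightarrow> norm (t *\<^sub>R c) \<le> real DIM('a) * t"
  using C_subset norm_le_of_mem_cube[of c 0 1] by (auto simp: mult.commute intro: mult_left_mono)

lemma emeasure_shell_le:
  fixes X :: real
  assumes "sets M = sets lebesgue" "0 < t" "0 \<le> X"
    and small: "\<And>c y. c \<in> C \<Longrightarrow> y \<in> cube (z + t *\<^sub>R c) (t / m) \<Longrightarrow> y \<in> cube z t \<Longrightarrow>
      y \<notin> cube z (t / 2) \<Longrightarrow> emeasure M (cube (z + t *\<^sub>R c) (t / m)) \<le> ennreal X"
  shows "emeasure M (cube z t - cube z (t / 2)) \<le> ennreal (card C * X)"
proof (rule emeasure_le_card_cover[of C _ M "\<lambda>c. cube (z + t *\<^sub>R c) (t / m)", OF finite_C])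
  show "cube z t - cube z (t / 2) \<subseteq> (\<Union>c\<in>C. cube (z + t *\<^sub>R c) (t / m))"
    using C_covers[OF \<open>0 < t\<close>] by blast
qed (use assms in \<open>auto simp: sets_cube\<close>)

end

text \<open>
  The exponent \<open>\<beta>\<close> stands for \<open>n \<lambda>\<close>, as \<open>|cube e s|^\<lambda> = (2 s)^(n \<lambda>)\<close>. Null singletons are
  needed because the dyadic shells of \<open>cube x \<rho>\<close> exhaust it only up to its centre.
\<close>

locale whitney_dominated = whitney_cover \<Lambda> \<nu> m C for \<Lambda> :: "'a::euclidean_space set" and \<nu> m C +
  fixes M :: "'a measure" and A \<beta> :: real
  assumes sets_M: "sets M = sets lebesgue" and emeasure_singleton: "\<And>x. emeasure M {x} = 0"
    and A_nonneg: "0 \<le> A" and beta_pos: "0 < \<beta>"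
    and whitney_bound: "\<And>e s. 0 < s \<Longrightarrow> cube e s \<in> whitney_cubes (1 / 2) (3 * real DIM('a) * m) \<Lambda> \<Longrightarrow>
      emeasure M (cube e s) \<le> ennreal (A * (2 * s) powr \<beta>)"
begin

lemma emeasure_cube_whitney:
  assumes "0 < s" "real DIM('a) * s \<le> setdist (cube e s) \<Lambda>"
    "setdist (cube e s) \<Lambda> \<le> 6 * real DIM('a) * m * s"
  shows "emeasure M (cube e s) \<le> ennreal (A * (2 * s) powr \<beta>)"
  using assms m_pos by (intro whitney_bound cube_in_whitney_cubesI) auto

lemma emeasure_small_cube_near_point:
  assumes "x \<in> \<Lambda>" "0 < t" "4 * real DIM('a) * \<nu> * t \<le> norm x" "c \<in> C"
    and y: "y \<in> cube (x + t *\<^sub>R c) (t / m)" "y \<notin> cube x (t / 2)"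
  shows "emeasure M (cube (x + t *\<^sub>R c) (t / m)) \<le> ennreal (A * (2 / m) powr \<beta> * t powr \<beta>)"
proof -
  have "0 < t / m" using \<open>0 < t\<close> m_pos by simp
  have offset: "norm (x + t *\<^sub>R c - x) \<le> real DIM('a) * t"
    using norm_cover_offset[OF \<open>c \<in> C\<close>] \<open>0 < t\<close> by simp
  have "emeasure M (cube (x + t *\<^sub>R c) (t / m)) \<le> ennreal (A * (2 * (t / m)) powr \<beta>)"
  proof (rule emeasure_cube_whitney[OF \<open>0 < t / m\<close>])
    show "real DIM('a) * (t / m) \<le> setdist (cube (x + t *\<^sub>R c) (t / m)) \<Lambda>"
      using mesh_small[OF \<open>0 < t\<close>] \<open>0 < t / m\<close> assms offset
      by (intro setdist_small_cube_near_point) auto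
    have "setdist (cube (x + t *\<^sub>R c) (t / m)) \<Lambda> \<le> dist (x + t *\<^sub>R c) x"
      using \<open>0 < t / m\<close> \<open>x \<in> \<Lambda>\<close> by (intro setdist_le_dist centre_mem_cube) auto
    also have "\<dots> \<le> 6 * real DIM('a) * m * (t / m)"
      using offset m_pos \<open>0 < t\<close> by (simp add: dist_norm)
    finally show "setdist (cube (x + t *\<^sub>R c) (t / m)) \<Lambda> \<le> 6 * real DIM('a) * m * (t / m)" .
  qed
  then show ?thesis
    using \<open>0 < t\<close> m_pos by (simp add: powr_mult[symmetric] mult.assoc)
qed

lemma emeasure_cube_near_point:
  assumes "x \<in> \<Lambda>" "0 < \<rho>" "4 * real DIM('a) * \<nu> * \<rho> \<le> norm x"
  shows "emeasure M (cube x \<rho>) \<le> ennreal (A * near_const \<beta> * \<rho> powr \<beta>)"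
proof -
  have "emeasure M (cube x t - cube x (t / 2)) \<le> ennreal (card C * A * (2 / m) powr \<beta> * t powr \<beta>)"
    if "0 < t" "t \<le> \<rho>" for t
  proof -
    have "4 * real DIM('a) * \<nu> * t \<le> 4 * real DIM('a) * \<nu> * \<rho>"
      using \<open>t \<le> \<rho>\<close> nu_pos by simp
    then have "4 * real DIM('a) * \<nu> * t \<le> norm x"
      using assms(3) by linarith
    then have "emeasure M (cube x t - cube x (t / 2)) \<le> ennreal (card C * (A * (2 / m) powr \<beta> * t powr \<beta>))"
      using emeasure_small_cube_near_point[OF assms(1) \<open>0 < t\<close>] A_nonneg
      by (intro emeasure_shell_le[OF sets_M \<open>0 < t\<close>]) auto
    then show ?thesis by (simp add: mult.assoc)
  qed
  then have "emeasure M (cube x \<rho>) \<le> emeasure M (cube x 0) +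
      ennreal (card C * A * (2 / m) powr \<beta> * \<rho> powr \<beta> / (1 - 1 / 2 powr \<beta>))"
    using A_nonneg beta_pos \<open>0 < \<rho>\<close> by (intro emeasure_cube_le_dyadic_shells[OF sets_M]) auto
  then show ?thesis
    by (simp add: emeasure_singleton near_const_def mult_ac)
qed

lemma emeasure_cube_origin:
  assumes "\<Lambda> \<noteq> {}"
  shows "emeasure M (cube 0 (infdist 0 \<Lambda> / (4 * real DIM('a))))
    \<le> ennreal (A * (infdist 0 \<Lambda> / (2 * real DIM('a))) powr \<beta>)"
proof (cases "infdist 0 \<Lambda> = 0")
  case False
  define \<tau> where "\<tau> = infdist 0 \<Lambda> / (4 * real DIM('a))"
  have "0 < \<tau>" using False infdist_nonneg[of 0 \<Lambda>] by (simp add: \<tau>_def)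
  have "emeasure M (cube 0 \<tau>) \<le> ennreal (A * (2 * \<tau>) powr \<beta>)"
  proof (rule emeasure_cube_whitney[OF \<open>0 < \<tau>\<close>])
    show "real DIM('a) * \<tau> \<le> setdist (cube 0 \<tau>) \<Lambda>"
    proof (rule le_setdistI)
      show "cube 0 \<tau> \<noteq> {}" using centre_mem_cube[of \<tau> 0] \<open>0 < \<tau>\<close> by auto
      fix u v :: 'a assume u: "u \<in> cube 0 \<tau>" and "v \<in> \<Lambda>"
      have "norm u \<le> real DIM('a) * \<tau>" using norm_le_of_mem_cube[OF u] by simp
      moreover have "4 * (real DIM('a) * \<tau>) \<le> norm v"
        using infdist_le[OF \<open>v \<in> \<Lambda>\<close>, of 0] by (simp add: \<tau>_def)
      moreover have "0 \<le> real DIM('a) * \<tau>" using \<open>0 < \<tau>\<close> by simp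
      ultimately show "real DIM('a) * \<tau> \<le> dist u v"
        unfolding dist_norm using norm_triangle_ineq2[of v u] norm_minus_commute[of u v] by linarith
    qed (rule assms)
    have "setdist (cube 0 \<tau>) \<Lambda> \<le> setdist {0} \<Lambda>"
      using \<open>0 < \<tau>\<close> by (intro setdist_subset_left) (auto intro: centre_mem_cube)
    also have "\<dots> = 4 * real DIM('a) * \<tau>" by (simp add: \<tau>_def infdist_eq_setdist)
    also have "\<dots> \<le> 6 * real DIM('a) * m * \<tau>"
      using m_ge_32 \<open>0 < \<tau>\<close> by simp
    finally show "setdist (cube 0 \<tau>) \<Lambda> \<le> 6 * real DIM('a) * m * \<tau>" .
  qed
  then show ?thesis by (simp add: \<tau>_def)
qed (simp add: emeasure_singleton)


lemma emeasure_small_cube_apart_from_set: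
  assumes "\<Lambda> \<noteq> {}" "infdist 0 \<Lambda> < 4 * real DIM('a) * t" "c \<in> C" "0 < t"
    and apart: "real DIM('a) * (t / m) \<le> setdist (cube (t *\<^sub>R c) (t / m)) \<Lambda>"
  shows "emeasure M (cube (t *\<^sub>R c) (t / m)) \<le> ennreal (A * (2 / m) powr \<beta> * t powr \<beta>)"
proof -
  have "0 < t / m" using \<open>0 < t\<close> m_pos by simp
  obtain x0 where "x0 \<in> \<Lambda>" "norm x0 < 4 * real DIM('a) * t"
    using assms(2) unfolding infdist_eq_setdist
    by (rule setdist_ltE) (use assms(1) in \<open>auto simp: dist_norm\<close>)
  have "setdist (cube (t *\<^sub>R c) (t / m)) \<Lambda> \<le> dist (t *\<^sub>R c) x0"
    using \<open>0 < t / m\<close> \<open>x0 \<in> \<Lambda>\<close> by (intro setdist_le_dist centre_mem_cube) auto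
  also have "\<dots> \<le> norm (t *\<^sub>R c) + norm x0"
    unfolding dist_norm by (rule norm_triangle_ineq4)
  also have "\<dots> \<le> 6 * (real DIM('a) * t)"
  proof -
    have "norm (t *\<^sub>R c) \<le> real DIM('a) * t" "0 \<le> real DIM('a) * t"
      using norm_cover_offset[OF \<open>c \<in> C\<close>] \<open>0 < t\<close> by simp_all
    moreover have "norm x0 < 4 * (real DIM('a) * t)"
      using \<open>norm x0 < 4 * real DIM('a) * t\<close> by (simp add: mult.assoc)
    ultimately show ?thesis by linarith
  qed
  also have "\<dots> = 6 * real DIM('a) * m * (t / m)"
    using m_pos by simp
  finally have "emeasure M (cube (t *\<^sub>R c) (t / m)) \<le> ennreal (A * (2 * (t / m)) powr \<beta>)"
    using apart \<open>0 < t / m\<close> by (intro emeasure_cube_whitney)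
  then show ?thesis
    using \<open>0 < t\<close> m_pos by (simp add: powr_mult[symmetric] mult.assoc)
qed

lemma emeasure_small_cube_close_to_set:
  assumes "\<Lambda> \<noteq> {}" "0 < t"
    and close: "setdist (cube e (t / m)) \<Lambda> < real DIM('a) * (t / m)"
    and "y \<in> cube e (t / m)" "y \<notin> cube 0 (t / 2)"
  shows "emeasure M (cube e (t / m))
    \<le> ennreal (A * near_const \<beta> * ((1 + 2 * real DIM('a)) / m) powr \<beta> * t powr \<beta>)"
proof -
  define s where "s = t / m"
  have "0 < s" using \<open>0 < t\<close> m_pos by (simp add: s_def)
  obtain x1 where "x1 \<in> \<Lambda>" and sub: "cube e s \<subseteq> cube x1 ((1 + 2 * real DIM('a)) * s)"
    and "norm y - 3 * real DIM('a) * s < norm x1"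
    using cube_close_to_set[OF close[folded s_def] \<open>0 < s\<close> assms(1)] assms(4) by (auto simp: s_def)
  moreover have "t / 2 < norm y"
    using norm_gt_of_not_mem_cube[OF assms(5)] by simp
  ultimately have "t / 4 < norm x1"
    using mesh_small[OF \<open>0 < t\<close>] norm_ge_zero[of x1] by (simp only: mult.assoc s_def)
  moreover have "4 * real DIM('a) * \<nu> * ((1 + 2 * real DIM('a)) * s) \<le> t / 4"
  proof -
    have "16 * real DIM('a) * \<nu> * (1 + 2 * real DIM('a)) * t \<le> m * t"
      using mesh_ge(2) \<open>0 < t\<close> by (intro mult_right_mono) auto
    then show ?thesis using m_pos by (simp add: s_def field_simps)
  qed
  ultimately have "4 * real DIM('a) * \<nu> * ((1 + 2 * real DIM('a)) * s) \<le> norm x1"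
    by linarith
  then have "emeasure M (cube x1 ((1 + 2 * real DIM('a)) * s))
      \<le> ennreal (A * near_const \<beta> * ((1 + 2 * real DIM('a)) * s) powr \<beta>)"
    using \<open>x1 \<in> \<Lambda>\<close> \<open>0 < s\<close> by (intro emeasure_cube_near_point) auto
  moreover have "emeasure M (cube e s) \<le> emeasure M (cube x1 ((1 + 2 * real DIM('a)) * s))"
    by (rule emeasure_mono[OF sub]) (simp add: sets_M sets_cube)
  ultimately show ?thesis
    using \<open>0 < t\<close> m_pos by (simp add: s_def powr_mult[symmetric] mult.assoc)
qed

lemma emeasure_small_cube_outer_shell:
  assumes "\<Lambda> \<noteq> {}" "infdist 0 \<Lambda> < 4 * real DIM('a) * t"
    and "c \<in> C" "y \<in> cube (t *\<^sub>R c) (t / m)" "y \<notin> cube 0 (t / 2)"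
  shows "emeasure M (cube (t *\<^sub>R c) (t / m)) \<le> ennreal (A * shell_const \<beta> * t powr \<beta>)"
proof -
  have "0 < 4 * real DIM('a) * t" using assms(2) infdist_nonneg[of 0 \<Lambda>] by linarith
  then have "0 < t" by (simp add: zero_less_mult_iff)
  define a where "a = A * (2 / m) powr \<beta> * t powr \<beta>"
  define b where "b = A * near_const \<beta> * ((1 + 2 * real DIM('a)) / m) powr \<beta> * t powr \<beta>"
  have "0 \<le> a" "0 \<le> b"
    using A_nonneg near_const_nonneg[OF beta_pos] by (simp_all add: a_def b_def)
  have "A * shell_const \<beta> * t powr \<beta> = a + b"
    by (simp add: a_def b_def shell_const_def distrib_left distrib_right)
  moreover consider "real DIM('a) * (t / m) \<le> setdist (cube (t *\<^sub>R c) (t / m)) \<Lambda>"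
    | "setdist (cube (t *\<^sub>R c) (t / m)) \<Lambda> < real DIM('a) * (t / m)" by linarith
  then have "emeasure M (cube (t *\<^sub>R c) (t / m)) \<le> ennreal a \<or>
      emeasure M (cube (t *\<^sub>R c) (t / m)) \<le> ennreal b"
    unfolding a_def b_def
    using emeasure_small_cube_apart_from_set[OF assms(1-3) \<open>0 < t\<close>]
      emeasure_small_cube_close_to_set[OF assms(1) \<open>0 < t\<close> _ assms(4,5)]
    by cases blast+
  ultimately show ?thesis
    using \<open>0 \<le> a\<close> \<open>0 \<le> b\<close> by (auto intro: order_trans ennreal_leI)
qed

lemma emeasure_outer_shell:
  assumes "\<Lambda> \<noteq> {}" "infdist 0 \<Lambda> < 4 * real DIM('a) * t"
  shows "emeasure M (cube 0 t - cube 0 (t / 2)) \<le> ennreal (card C * A * shell_const \<beta> * t powr \<beta>)"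
proof -
  have "0 < 4 * real DIM('a) * t" using assms(2) infdist_nonneg[of 0 \<Lambda>] by linarith
  then have "0 < t" by (simp add: zero_less_mult_iff)
  have "emeasure M (cube 0 t - cube 0 (t / 2)) \<le> ennreal (card C * (A * shell_const \<beta> * t powr \<beta>))"
    using emeasure_small_cube_outer_shell[OF assms] A_nonneg shell_const_nonneg[OF beta_pos]
    by (intro emeasure_shell_le[OF sets_M \<open>0 < t\<close>]) auto
  then show ?thesis by (simp add: mult.assoc)
qed

lemma emeasure_cube_origin_le_shells:
  assumes "\<Lambda> \<noteq> {}" "0 \<le> T"
  shows "emeasure M (cube 0 T) \<le> emeasure M (cube 0 (infdist 0 \<Lambda> / (4 * real DIM('a)))) +
    ennreal (card C * A * shell_const \<beta> * T powr \<beta> / (1 - 1 / 2 powr \<beta>))"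
proof (rule emeasure_cube_le_dyadic_shells[OF sets_M _ \<open>0 \<le> T\<close> beta_pos])
  show "0 \<le> infdist 0 \<Lambda> / (4 * real DIM('a))" "0 \<le> card C * A * shell_const \<beta>"
    using A_nonneg shell_const_nonneg[OF beta_pos] by (simp_all add: infdist_nonneg)
  fix t assume "infdist 0 \<Lambda> / (4 * real DIM('a)) < t"
  then have "infdist 0 \<Lambda> < 4 * real DIM('a) * t" by (simp add: field_simps)
  then show "emeasure M (cube 0 t - cube 0 (t / 2)) \<le> ennreal (card C * A * shell_const \<beta> * t powr \<beta>)"
    by (rule emeasure_outer_shell[OF \<open>\<Lambda> \<noteq> {}\<close>])
qed

lemma emeasure_cube_far_from_point:
  assumes "x \<in> \<Lambda>" "0 < R" "norm x < 4 * real DIM('a) * \<nu> * R"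
  shows "emeasure M (cube x R) \<le> ennreal (A * far_const \<beta> * R powr \<beta>)"
proof -
  define T where "T = (1 + 4 * real DIM('a) * \<nu>) * R"
  define K where "K = card C * A * shell_const \<beta>"
  have "\<Lambda> \<noteq> {}" using assms(1) by auto
  have "0 \<le> T" "0 \<le> K"
    using assms(2) nu_pos A_nonneg shell_const_nonneg[OF beta_pos] by (simp_all add: T_def K_def)
  have "cube x R \<subseteq> cube 0 T"
    using assms(3) by (intro cube_subset_cube) (simp add: T_def algebra_simps)
  then have "emeasure M (cube x R) \<le> emeasure M (cube 0 T)"
    by (rule emeasure_mono) (simp add: sets_M sets_cube)
  also have "\<dots> \<le> emeasure M (cube 0 (infdist 0 \<Lambda> / (4 * real DIM('a)))) +
      ennreal (K * T powr \<beta> / (1 - 1 / 2 powr \<beta>))"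
    unfolding K_def by (rule emeasure_cube_origin_le_shells[OF \<open>\<Lambda> \<noteq> {}\<close> \<open>0 \<le> T\<close>])
  also have "emeasure M (cube 0 (infdist 0 \<Lambda> / (4 * real DIM('a)))) \<le> ennreal (A * (2 * \<nu> * R) powr \<beta>)"
  proof -
    have "infdist 0 \<Lambda> / (2 * real DIM('a)) \<le> 2 * \<nu> * R"
      using infdist_le[OF assms(1), of 0] assms(3) by (simp add: field_simps)
    then have "A * (infdist 0 \<Lambda> / (2 * real DIM('a))) powr \<beta> \<le> A * (2 * \<nu> * R) powr \<beta>"
      using A_nonneg beta_pos by (intro mult_left_mono powr_mono2) (auto simp: infdist_nonneg)
    then show ?thesis
      using emeasure_cube_origin[OF \<open>\<Lambda> \<noteq> {}\<close>] ennreal_leI order_trans by blast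
  qed
  also have "ennreal (A * (2 * \<nu> * R) powr \<beta>) + ennreal (K * T powr \<beta> / (1 - 1 / 2 powr \<beta>))
      = ennreal (A * far_const \<beta> * R powr \<beta>)"
  proof -
    have "T powr \<beta> = (1 + 4 * real DIM('a) * \<nu>) powr \<beta> * R powr \<beta>"
      "(2 * \<nu> * R) powr \<beta> = (2 * \<nu>) powr \<beta> * R powr \<beta>"
      using assms(2) nu_pos by (simp_all add: T_def powr_mult)
    then have "A * (2 * \<nu> * R) powr \<beta> + K * T powr \<beta> / (1 - 1 / 2 powr \<beta>) = A * far_const \<beta> * R powr \<beta>"
      by (simp add: far_const_def K_def distrib_left distrib_right mult_ac)
    moreover have "0 \<le> K * T powr \<beta> / (1 - 1 / 2 powr \<beta>)"
      using \<open>0 \<le> K\<close> beta_pos by (intro divide_nonneg_pos) auto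
    ultimately show ?thesis
      using A_nonneg by (simp add: ennreal_plus[symmetric])
  qed
  finally show ?thesis by (simp add: add_right_mono)
qed

lemma emeasure_centred_cube:
  assumes "x \<in> \<Lambda>" "0 < R"
  shows "emeasure M (cube x R) \<le> ennreal (centred_const \<beta> * A * (2 * R) powr \<beta>)"
proof -
  have "emeasure M (cube x R) \<le> ennreal (A * centred_const \<beta> * R powr \<beta>)"
  proof (cases "4 * real DIM('a) * \<nu> * R \<le> norm x")
    case True
    then have "emeasure M (cube x R) \<le> ennreal (A * near_const \<beta> * R powr \<beta>)"
      using assms by (intro emeasure_cube_near_point)
    also have "\<dots> \<le> ennreal (A * centred_const \<beta> * R powr \<beta>)"
      using A_nonneg far_const_pos[OF beta_pos]
      by (intro ennreal_leI mult_right_mono mult_left_mono) (auto simp: centred_const_def)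
    finally show ?thesis .
  next
    case False
    then have "emeasure M (cube x R) \<le> ennreal (A * far_const \<beta> * R powr \<beta>)"
      using assms by (intro emeasure_cube_far_from_point) auto
    also have "\<dots> \<le> ennreal (A * centred_const \<beta> * R powr \<beta>)"
      using A_nonneg near_const_nonneg[OF beta_pos]
      by (intro ennreal_leI mult_right_mono mult_left_mono) (auto simp: centred_const_def)
    finally show ?thesis .
  qed
  also have "\<dots> \<le> ennreal (centred_const \<beta> * A * (2 * R) powr \<beta>)"
  proof (intro ennreal_leI)
    have "R powr \<beta> \<le> (2 * R) powr \<beta>"
      using assms(2) beta_pos by (intro powr_mono2) auto
    then have "centred_const \<beta> * A * R powr \<beta> \<le> centred_const \<beta> * A * (2 * R) powr \<beta>"
      using A_nonneg centred_const_pos[OF beta_pos] by (intro mult_left_mono) auto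
    then show "A * centred_const \<beta> * R powr \<beta> \<le> centred_const \<beta> * A * (2 * R) powr \<beta>"
      by (simp only: mult.commute[of A "centred_const \<beta>"])
  qed
  finally show ?thesis .
qed

end

context whitney_cover
begin

lemma emeasure_centred_cube_le_whitney:
  assumes "sets M = sets lebesgue" "\<And>x. emeasure M {x} = 0" "0 \<le> A" "0 < lam"
    and whitney: "\<And>Q. Q \<in> whitney_cubes (1 / 2) (3 * real DIM('a) * m) \<Lambda> \<Longrightarrow>
      emeasure M Q \<le> ennreal (A * measure lebesgue Q powr lam)"
    and "Q' \<in> centred_cubes \<Lambda>"
  shows "emeasure M Q' \<le> ennreal (centred_const (real DIM('a) * lam) * A * measure lebesgue Q' powr lam)"
proof -
  interpret whitney_dominated \<Lambda> \<nu> m C M A "real DIM('a) * lam"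
  proof unfold_locales
    show "emeasure M (cube e s) \<le> ennreal (A * (2 * s) powr (real DIM('a) * lam))"
      if "0 < s" "cube e s \<in> whitney_cubes (1 / 2) (3 * real DIM('a) * m) \<Lambda>" for e s
      using whitney[OF that(2)] measure_cube_powr[OF that(1), of e lam] by simp
  qed (use assms in auto)
  obtain x R where "Q' = cube x R" "x \<in> \<Lambda>" "0 < R"
    using \<open>Q' \<in> centred_cubes \<Lambda>\<close> by (auto simp: centred_cubes_def)
  then show ?thesis
    using emeasure_centred_cube measure_cube_powr[of R x lam] by simp
qed

lemma morrey_norm_centred_le_whitney:
  assumes "0 < lam" "0 < p" "f \<in> borel_measurable lebesgue" "w \<in> borel_measurable lebesgue"
  shows "morrey_norm p lam (centred_cubes \<Lambda>) w f \<le>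
    ennreal (centred_const (real DIM('a) * lam) powr (1 / p)) *
    morrey_norm p lam (whitney_cubes (1 / 2) (3 * real DIM('a) * m) \<Lambda>) w f"
  using assms(1) centred_const_pos[of "real DIM('a) * lam"] emeasure_centred_cube_le_whitney
  by (intro morrey_norm_le_transfer[OF assms(2) _ _ _ assms(3,4)])
    (auto simp: centred_cubes_def whitney_cubes_def all_cubes_def)

lemma morrey_norms_equivalent:
  assumes "0 < lam" "0 < p" "w \<in> borel_measurable lebesgue"
  shows "\<exists>K\<ge>1. \<forall>f. f \<in> borel_measurable lebesgue \<longrightarrow>
    ennreal (1 / K) * morrey_norm p lam (whitney_cubes (1 / 2) (3 * real DIM('a) * m) \<Lambda>) w f
      \<le> morrey_norm p lam (centred_cubes \<Lambda>) w f \<and>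
    morrey_norm p lam (centred_cubes \<Lambda>) w f
      \<le> ennreal K * morrey_norm p lam (whitney_cubes (1 / 2) (3 * real DIM('a) * m) \<Lambda>) w f"
proof -
  define W where "W = whitney_cubes (1 / 2) (3 * real DIM('a) * m) \<Lambda>"
  define K1 where "K1 = centred_const (real DIM('a) * lam) powr (1 / p)"
  define K2 where
    "K2 = ((2 + real DIM('a) * (1 + 2 * (3 * real DIM('a) * m))) powr (real DIM('a) * lam)) powr (1 / p)"
  define K where "K = max 1 (max K1 K2)"
  have "0 \<le> 3 * real DIM('a) * m" using m_pos by simp
  have "ennreal (1 / K) * morrey_norm p lam W w f \<le> morrey_norm p lam (centred_cubes \<Lambda>) w f \<and>
      morrey_norm p lam (centred_cubes \<Lambda>) w f \<le> ennreal K * morrey_norm p lam W w f"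
    if "f \<in> borel_measurable lebesgue" for f
    using ennreal_two_sided_bound[OF morrey_norm_centred_le_whitney[OF assms(1,2) that assms(3)]
        morrey_norm_whitney_le_centred[OF _ \<open>0 \<le> 3 * real DIM('a) * m\<close> assms(2) that assms(3)], of K]
    by (simp add: W_def K_def K1_def K2_def)
  moreover have "1 \<le> K" by (simp add: K_def)
  ultimately show ?thesis unfolding W_def by blast
qed

end

theorem lemma1p4:
  fixes \<nu> :: real
  assumes "\<nu> > 1"
  shows "\<exists>r1 r2. 0 < r1 \<and> r1 < r2 \<and>
    (\<forall>(\<Lambda> :: 'a::euclidean_space set) (w :: 'a \<Rightarrow> real) (lam :: real) (p :: real).
       countable \<Lambda> \<longrightarrow>
       (\<forall>x\<in>\<Lambda>. \<forall>y\<in>\<Lambda>. x \<noteq> y \<longrightarrow> max (norm x) (norm y) \<le> \<nu> * norm (x - y)) \<longrightarrow>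
       0 < lam \<longrightarrow> lam < 1 \<longrightarrow> p > 1 \<longrightarrow>
       (\<forall>x. w x \<ge> 0) \<longrightarrow> locally_integrable w \<longrightarrow>
       (\<exists>C::real. C \<ge> 1 \<and>
          (\<forall>f :: 'a \<Rightarrow> real. f \<in> borel_measurable lebesgue \<longrightarrow>
             (let F = {cube c r | c r. c \<in> \<Lambda> \<and> r > 0};
                  W = {Q \<in> all_cubes. r1 * diameter Q \<le> setdist Q \<Lambda> \<and>
                                       setdist Q \<Lambda> \<le> r2 * diameter Q}
              in ennreal (1 / C) * morrey_norm p lam W w f \<le> morrey_norm p lam F w f \<and>
                 morrey_norm p lam F w f \<le> ennreal C * morrey_norm p lam W w f))))"
proof -
  define m :: real where "m = 16 * real DIM('a) * (2 + \<nu> * (1 + 2 * real DIM('a)))"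
  define r2 where "r2 = 3 * real DIM('a) * m"
  have mesh: "32 * real DIM('a) \<le> m" "16 * real DIM('a) * \<nu> * (1 + 2 * real DIM('a)) \<le> m"
    using assms by (simp_all add: m_def algebra_simps)
  have "1 \<le> real DIM('a)" using DIM_positive[where 'a='a] by linarith
  moreover have "32 \<le> m" using mesh(1) \<open>1 \<le> real DIM('a)\<close> by linarith
  ultimately have "m \<le> real DIM('a) * m" using mult_right_mono[of 1 "real DIM('a)" m] by simp
  then have "0 < m" "1 / 2 < r2"
    using \<open>32 \<le> m\<close> unfolding r2_def mult.assoc by linarith+
  obtain centres :: "'a set" where centres: "finite centres" "centres \<subseteq> cube 0 1"
    "\<And>z t y. 0 < t \<Longrightarrow> y \<in> cube z t \<Longrightarrow> \<exists>c\<in>centres. y \<in> cube (z + t *\<^sub>R c) (t / m)"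
    using finite_cube_cover[OF \<open>0 < m\<close>] by blast
  have cover: "whitney_cover \<Lambda> \<nu> m centres"
    if "\<forall>x\<in>\<Lambda>. \<forall>y\<in>\<Lambda>. x \<noteq> y \<longrightarrow> max (norm x) (norm y) \<le> \<nu> * norm (x - y)" for \<Lambda>
    by unfold_locales (use assms that centres mesh in auto)
  show ?thesis
    unfolding Let_def centred_cubes_def[symmetric] whitney_cubes_def[symmetric]
  proof (rule exI[of _ "1 / 2"], rule exI[of _ r2], intro conjI allI impI)
    show "0 < (1::real) / 2" by simp
    show "1 / 2 < r2" by fact
  qed (unfold r2_def, rule whitney_cover.morrey_norms_equivalent[OF cover];
       simp add: locally_integrable_borel_measurable)
qed

end
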